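(* Let $\overline G$ be a finite graph embedded in an annulus $A$ with annular connectivity $\kappa(\overline G)=1$, and let $G$ be its lift to the universal cover of $A$. Let $v$ be a vertex forming an annular cut set, and let $H$ be the finite graph obtained by splitting $\overline G$ at $v$ into two vertices $v',v''$, so that $G$ is the infinite join $\cdots * H_\nu * H_{\nu+1}*\cdots$ of copies $(H_\nu,v'_\nu,v''_\nu)$ of $(H,v',v'')$, with $H_\nu$ joined to $H_{\nu+1}$ by identifying $v'_\nu$ with $v''_{\nu+1}$. Then, over $\mathbb F=\mathbb Q$, the Laplacian polynomial satisfies $\Delta_0(x)=\tau(H)(x-1)^2$ (up to units of $\mathbb Q[x^{\pm1}]$), where $\tau(H)$ is the number of spanning trees of $H$.
   Context: $\mathbb Z=\langle x\rangle$ acts on $G$ by deck transformations with quotient $\overline G$ with vertices $v_1,\dots,v_n$; choose lifts $v_{i,0}$ and set $v_{i,\nu}=x^\nu v_{i,0}$. The Laplacian matrix is $L(x)=D-A(x)$ over $\mathbb Q[x^{\pm1}]$, $D$ the diagonal matrix of degrees (loops counted twice), $A(x)_{ij}$ the sum of $x^\nu$ over edges of $G$ from $v_{i,0}$ to $v_{j,\nu}$; $\Delta_0=\det L(x)$, defined up to units. An annular cut set of $\overline G$ is a set of vertices whose removal (with incident edges) leaves a graph contained in a disk in $A$; $\kappa(\overline G)$ is the minimal cardinality of such a set. *)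

theory Defs
  imports "HOL-Computational_Algebra.Formal_Laurent_Series" "Jordan_Normal_Form.Determinant"
begin

definition multigraph :: "'v set \<Rightarrow> 'e set \<Rightarrow> ('e \<Rightarrow> 'v \<times> 'v) \<Rightarrow> bool" where
  "multigraph V E ends \<longleftrightarrow> finite V \<and> finite E \<and>
     (\<forall>e\<in>E. fst (ends e) \<in> V \<and> snd (ends e) \<in> V)"

definition adj_in :: "'e set \<Rightarrow> ('e \<Rightarrow> 'v \<times> 'v) \<Rightarrow> 'v \<Rightarrow> 'v \<Rightarrow> bool" where
  "adj_in T ends u w \<longleftrightarrow> (\<exists>e\<in>T. ends e = (u, w) \<or> ends e = (w, u))"

definition spanning_tree :: "'v set \<Rightarrow> 'e set \<Rightarrow> ('e \<Rightarrow> 'v \<times> 'v) \<Rightarrow> 'e set \<Rightarrow> bool" where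
  "spanning_tree V E ends T \<longleftrightarrow> T \<subseteq> E \<and> card T + 1 = card V \<and>
     (\<forall>u\<in>V. \<forall>w\<in>V. (adj_in T ends)\<^sup>*\<^sup>* u w)"

definition num_spanning_trees :: "'v set \<Rightarrow> 'e set \<Rightarrow> ('e \<Rightarrow> 'v \<times> 'v) \<Rightarrow> nat" where
  "num_spanning_trees V E ends = card {T. spanning_tree V E ends T}"

text \<open>A Z-periodic graph G is given by its finite quotient data: the vertex orbits Vq
  (vertex (i,\<nu>) of G stands for v_{i,\<nu>} = x^\<nu> v_{i,0}) and a finite set Eq of edge orbit
  representatives; the representative of e joins pends e = ((a,\<alpha>),(b,\<beta>)) in G, and its
  translate by x^k joins (a,\<alpha>+k) and (b,\<beta>+k).  The edges of G at v_{i,0} leading to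
  v_{j,\<nu>} are then exactly the translates of representatives with a = i, b = j,
  \<nu> = \<beta> - \<alpha> (translate by -\<alpha>) or b = i, a = j, \<nu> = \<alpha> - \<beta> (translate by -\<beta>);
  a loop of G is thereby counted twice, as is its contribution to the degree.\<close>

definition per_adj :: "'e set \<Rightarrow> ('e \<Rightarrow> ('v \<times> int) \<times> ('v \<times> int)) \<Rightarrow> 'v \<Rightarrow> 'v \<Rightarrow> rat fls" where
  "per_adj Eq pends i j =
     (\<Sum>e\<in>Eq. (case pends e of ((a,\<alpha>),(b,\<beta>)) \<Rightarrow>
        (if a = i \<and> b = j then fls_X_intpow (\<beta> - \<alpha>) else 0) +
        (if b = i \<and> a = j then fls_X_intpow (\<alpha> - \<beta>) else 0)))"

definition per_deg :: "'e set \<Rightarrow> ('e \<Rightarrow> ('v \<times> int) \<times> ('v \<times> int)) \<Rightarrow> 'v \<Rightarrow> rat fls" where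
  "per_deg Eq pends i =
     (\<Sum>e\<in>Eq. (case pends e of ((a,\<alpha>),(b,\<beta>)) \<Rightarrow>
        (if a = i then 1 else 0) + (if b = i then 1 else 0)))"

text \<open>Laplacian matrix L(x) = D - A(x), rows/columns indexed by the vertices of the quotient
  listed in increasing order, entries in Q[x^{\<plusminus>1}] \<subseteq> Q((x)).\<close>
definition per_laplacian ::
  "'v::linorder set \<Rightarrow> 'e set \<Rightarrow> ('e \<Rightarrow> ('v \<times> int) \<times> ('v \<times> int)) \<Rightarrow> rat fls mat" where
  "per_laplacian Vq Eq pends =
     (let vs = sorted_list_of_set Vq in
      mat (length vs) (length vs)
        (\<lambda>(r, s). (if r = s then per_deg Eq pends (vs ! r) else 0)
                  - per_adj Eq pends (vs ! r) (vs ! s)))"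

definition laplacian_poly ::
  "'v::linorder set \<Rightarrow> 'e set \<Rightarrow> ('e \<Rightarrow> ('v \<times> int) \<times> ('v \<times> int)) \<Rightarrow> rat fls" where
  "laplacian_poly Vq Eq pends = det (per_laplacian Vq Eq pends)"

text \<open>Quotient vertices: V - {v''} (v' represents the cut vertex v, lift v_0 = v'_0).
  Vertex w of the copy H_0 is (w,0) for w \<noteq> v'' and v''_0 = v'_{-1} = (v',-1).\<close>
definition join_lift :: "'v \<Rightarrow> 'v \<Rightarrow> 'v \<Rightarrow> 'v \<times> int" where
  "join_lift v' v'' w = (if w = v'' then (v', -1) else (w, 0))"

definition join_ends :: "('e \<Rightarrow> 'v \<times> 'v) \<Rightarrow> 'v \<Rightarrow> 'v \<Rightarrow> 'e \<Rightarrow> ('v \<times> int) \<times> ('v \<times> int)" where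
  "join_ends ends v' v'' e =
     (join_lift v' v'' (fst (ends e)), join_lift v' v'' (snd (ends e)))"

text \<open>Units of Q[x^{\<plusminus>1}] are c x^k with c \<noteq> 0.\<close>
definition assoc_laurent :: "rat fls \<Rightarrow> rat fls \<Rightarrow> bool" where
  "assoc_laurent p q \<longleftrightarrow> (\<exists>c::rat. \<exists>k::int. c \<noteq> 0 \<and> p = fls_const c * fls_X_intpow k * q)"

end

theory Submission
  imports Defs
begin

text \<open>
  The quotient Laplacian of the infinite join lives on the vertices of H other than v''; it is
  the Laplacian L of H with row v'' added x times to row v' and column v'' added x^-1
  times to column v', then row and column v'' deleted. Since all rows and columns of L sum to
  zero, deleting row v' instead of row v'' only changes the sign of a minor, so multilinearity
  of the determinant gives \<Delta>_0 = (1 - x)(1 - x^-1) det L', where L' is L with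
  row and column v'' removed. By the matrix-tree theorem, proved by deletion and contraction
  of an edge at the deleted vertex, det L' = \<tau>(H); and (1 - x)(1 - x^-1) is
  -x^-1 (x - 1)^2.
\<close>

section \<open>Determinants of matrices indexed by a finite set\<close>

definition det_on :: "'i set \<Rightarrow> ('i \<Rightarrow> 'i \<Rightarrow> 'a::comm_ring_1) \<Rightarrow> 'a" where
  "det_on W f = (\<Sum>p\<in>{p. p permutes W}. of_int (sign p) * (\<Prod>i\<in>W. f i (p i)))"

lemma det_on_empty [simp]: "det_on {} f = 1"
  unfolding det_on_def by simp

lemma det_on_cong:
  assumes "\<And>i j. i \<in> W \<Longrightarrow> j \<in> W \<Longrightarrow> f i j = g i j"
  shows "det_on W f = det_on W g"
  unfolding det_on_def
  by (intro sum.cong refl arg_cong2[where f="(*)"] prod.cong)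
     (auto intro: assms permutes_in_image[THEN iffD2])

lemma det_on_reindex:
  assumes bij: "bij_betw \<sigma> A B" and fin: "finite A"
  shows "det_on A (\<lambda>i j. f (\<sigma> i) (\<sigma> j)) = det_on B f"
proof -
  let ?\<phi> = "\<lambda>\<pi> x. if x \<in> B then \<sigma> (\<pi> (inv_into A \<sigma> x)) else x"
  have b: "bij_betw ?\<phi> {\<pi>. \<pi> permutes A} {\<pi>. \<pi> permutes B}"
    by (rule bij_betw_permutations[OF bij])
  have "det_on B f = (\<Sum>\<pi>\<in>{\<pi>. \<pi> permutes A}. of_int (sign (?\<phi> \<pi>)) * (\<Prod>i\<in>B. f i (?\<phi> \<pi> i)))"
    unfolding det_on_def by (rule sum.reindex_bij_betw[OF b, symmetric])
  also have "\<dots> = (\<Sum>\<pi>\<in>{\<pi>. \<pi> permutes A}. of_int (sign \<pi>) * (\<Prod>i\<in>A. f (\<sigma> i) (\<sigma> (\<pi> i))))"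
  proof (rule sum.cong[OF refl])
    fix \<pi> assume "\<pi> \<in> {\<pi>. \<pi> permutes A}"
    hence p: "\<pi> permutes A" by simp
    interpret permutes_bij_finite \<pi> A B \<sigma> "inv_into A \<sigma>" "?\<phi> \<pi>"
      by unfold_locales (use p bij fin in \<open>auto simp: bij_betw_inv_into_left\<close>)
    have "(\<Prod>i\<in>B. f i (?\<phi> \<pi> i)) = (\<Prod>j\<in>A. f (\<sigma> j) (?\<phi> \<pi> (\<sigma> j)))"
      by (rule prod.reindex_bij_betw[OF bij, symmetric])
    also have "\<dots> = (\<Prod>j\<in>A. f (\<sigma> j) (\<sigma> (\<pi> j)))"
      by (intro prod.cong refl) (use bij in \<open>auto simp: bij_betw_inv_into_left bij_betwE\<close>)
    finally show "of_int (sign (?\<phi> \<pi>)) * (\<Prod>i\<in>B. f i (?\<phi> \<pi> i))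
        = of_int (sign \<pi>) * (\<Prod>i\<in>A. f (\<sigma> i) (\<sigma> (\<pi> i)))"
      using sign_p' by simp
  qed
  finally show ?thesis unfolding det_on_def by simp
qed

lemma det_on_transpose:
  assumes fin: "finite W"
  shows "det_on W (\<lambda>i j. f j i) = det_on W f"
proof -
  have b: "bij_betw Hilbert_Choice.inv {p. p permutes W} {p. p permutes W}"
    by (rule bij_betw_byWitness[where f'=Hilbert_Choice.inv]) (auto simp: permutes_inv permutes_inv_inv)
  have "det_on W f = (\<Sum>p\<in>{p. p permutes W}. of_int (sign (Hilbert_Choice.inv p)) * (\<Prod>i\<in>W. f i (Hilbert_Choice.inv p i)))"
    unfolding det_on_def by (rule sum.reindex_bij_betw[OF b, symmetric])
  also have "\<dots> = (\<Sum>p\<in>{p. p permutes W}. of_int (sign p) * (\<Prod>i\<in>W. f (p i) i))"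
  proof (rule sum.cong[OF refl])
    fix p assume "p \<in> {p. p permutes W}"
    hence p: "p permutes W" by simp
    have "(\<Prod>i\<in>W. f i (Hilbert_Choice.inv p i)) = (\<Prod>i\<in>W. f (p i) (Hilbert_Choice.inv p (p i)))"
      by (rule prod.reindex_bij_betw[OF permutes_imp_bij[OF p], symmetric])
    also have "\<dots> = (\<Prod>i\<in>W. f (p i) i)" using p by (simp add: permutes_inverses)
    finally show "of_int (sign (Hilbert_Choice.inv p)) * (\<Prod>i\<in>W. f i (Hilbert_Choice.inv p i)) = of_int (sign p) * (\<Prod>i\<in>W. f (p i) i)"
      using p fin by (simp add: sign_inverse permutes_imp_permutation)
  qed
  finally show ?thesis unfolding det_on_def by simp
qed

lemma det_on_row_linear:
  assumes fin: "finite W" and i: "i \<in> W"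
  shows "det_on W (\<lambda>a b. if a = i then c * g b + h b else f a b)
       = c * det_on W (\<lambda>a b. if a = i then g b else f a b) + det_on W (\<lambda>a b. if a = i then h b else f a b)"
proof -
  have row_i: "(\<Prod>a\<in>W. if a = i then k (p a) else f a (p a)) = k (p i) * (\<Prod>a\<in>W-{i}. f a (p a))"
    for k p
  proof -
    have "(\<Prod>a\<in>W-{i}. if a = i then k (p a) else f a (p a)) = (\<Prod>a\<in>W-{i}. f a (p a))"
      by (rule prod.cong) auto
    thus ?thesis using fin i by (simp add: prod.remove)
  qed
  show ?thesis
    unfolding det_on_def sum_distrib_left sum.distrib[symmetric]
    using row_i[of "\<lambda>y. c * g y + h y"] row_i[of g] row_i[of h]
    by (intro sum.cong refl) (simp add: algebra_simps)
qed

lemma det_on_zero_row: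
  assumes fin: "finite W" and i: "i \<in> W" and zero: "\<And>j. j \<in> W \<Longrightarrow> f i j = 0"
  shows "det_on W f = 0"
  unfolding det_on_def
proof (intro sum.neutral ballI)
  fix p assume "p \<in> {p. p permutes W}"
  hence "p i \<in> W" using i by (simp add: permutes_in_image)
  hence "(\<Prod>a\<in>W. f a (p a)) = 0" using fin i zero by (intro prod_zero) auto
  thus "of_int (sign p) * (\<Prod>a\<in>W. f a (p a)) = 0" by simp
qed

lemma det_on_row_add:
  assumes "finite W" and "i \<in> W"
  shows "det_on W (\<lambda>a b. if a = i then g b + h b else f a b)
       = det_on W (\<lambda>a b. if a = i then g b else f a b) + det_on W (\<lambda>a b. if a = i then h b else f a b)"
  using det_on_row_linear[OF assms, of 1 g h f] by (simp cong: if_cong)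

lemma det_on_row_scale:
  assumes fin: "finite W" and i: "i \<in> W"
  shows "det_on W (\<lambda>a b. if a = i then c * g b else f a b) = c * det_on W (\<lambda>a b. if a = i then g b else f a b)"
  using det_on_row_linear[OF fin i, of c g "\<lambda>_. 0" f]
    det_on_zero_row[OF fin i, of "\<lambda>a b. if a = i then 0 else f a b"]
  by (simp cong: if_cong)

lemma det_on_row_sum:
  assumes fin: "finite W" and i: "i \<in> W" and K: "finite K"
  shows "det_on W (\<lambda>a b. if a = i then (\<Sum>k\<in>K. g k b) else f a b)
       = (\<Sum>k\<in>K. det_on W (\<lambda>a b. if a = i then g k b else f a b))"
  using K
proof (induction K rule: finite_induct)
  case empty
  then show ?case using det_on_zero_row[OF fin i, of "\<lambda>a b. if a = i then 0 else f a b"] by (simp cong: if_cong)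
next
  case (insert k K)
  then show ?case using det_on_row_add[OF fin i, of "g k" "\<lambda>b. \<Sum>k\<in>K. g k b" f] by (simp cong: if_cong)
qed

lemma det_on_identical_rows:
  fixes f :: "'i \<Rightarrow> 'i \<Rightarrow> 'a::field_char_0"
  assumes fin: "finite W" and i: "i \<in> W" and k: "k \<in> W" and ik: "i \<noteq> k"
    and eq: "\<And>j. j \<in> W \<Longrightarrow> f i j = f k j"
  shows "det_on W f = 0"
proof -
  let ?t = "Transposition.transpose i k"
  have tW: "?t permutes W" using i k by (simp add: permutes_swap_id)
  have b: "bij_betw (\<lambda>p. p \<circ> ?t) {p. p permutes W} {p. p permutes W}"
    by (rule bij_betw_byWitness[where f'="\<lambda>p. p \<circ> ?t"])
       (auto simp: o_assoc[symmetric] permutes_compose[OF tW])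
  have "det_on W f = (\<Sum>p\<in>{p. p permutes W}. of_int (sign (p \<circ> ?t)) * (\<Prod>a\<in>W. f a ((p \<circ> ?t) a)))"
    unfolding det_on_def by (rule sum.reindex_bij_betw[OF b, symmetric])
  also have "\<dots> = - det_on W f"
    unfolding det_on_def sum_negf[symmetric]
  proof (rule sum.cong[OF refl])
    fix p assume "p \<in> {p. p permutes W}"
    hence p: "p permutes W" by simp
    have "(\<Prod>a\<in>W. f a ((p \<circ> ?t) a)) = (\<Prod>a\<in>W. f (?t a) ((p \<circ> ?t) (?t a)))"
      by (rule prod.reindex_bij_betw[OF permutes_imp_bij[OF tW], symmetric])
    also have "\<dots> = (\<Prod>a\<in>W. f a (p a))"
      using eq p by (intro prod.cong refl) (auto simp: Transposition.transpose_def permutes_in_image)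
    finally show "of_int (sign (p \<circ> ?t)) * (\<Prod>a\<in>W. f a ((p \<circ> ?t) a)) = - (of_int (sign p) * (\<Prod>a\<in>W. f a (p a)))"
      using p fin ik by (simp add: sign_compose permutes_imp_permutation permutation_swap_id sign_swap_id)
  qed
  finally show ?thesis by simp
qed

lemma det_on_add_other_rows:
  fixes f :: "'i \<Rightarrow> 'i \<Rightarrow> 'a::field_char_0"
  assumes fin: "finite W" and i: "i \<in> W"
  shows "det_on W (\<lambda>a b. if a = i then (\<Sum>k\<in>W. f k b) else f a b) = det_on W f"
proof -
  have "det_on W (\<lambda>a b. if a = i then (\<Sum>k\<in>W. f k b) else f a b)
      = (\<Sum>k\<in>W. det_on W (\<lambda>a b. if a = i then f k b else f a b))"
    by (rule det_on_row_sum[OF fin i fin])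
  also have "\<dots> = det_on W (\<lambda>a b. if a = i then f i b else f a b)"
  proof -
    have "det_on W (\<lambda>a b. if a = i then f k b else f a b) = 0" if "k \<in> W - {i}" for k
      by (rule det_on_identical_rows[OF fin i, of k]) (use that in auto)
    thus ?thesis using fin i by (simp add: sum.remove)
  qed
  also have "\<dots> = det_on W f" by (rule det_on_cong) auto
  finally show ?thesis .
qed

lemma det_on_unit_row:
  assumes fin: "finite W" and b: "b \<in> W" and unit: "\<And>j. j \<in> W \<Longrightarrow> f b j = of_bool (j = b)"
  shows "det_on W f = det_on (W - {b}) f"
proof -
  have fix_b: "{p. p permutes W \<and> p b = b} = {p. p permutes (W - {b})}"
    by (auto simp: permutes_def)
  have "det_on W f = (\<Sum>p\<in>{p. p permutes W \<and> p b = b}. of_int (sign p) * (\<Prod>i\<in>W. f i (p i)))"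
    unfolding det_on_def
  proof (rule sum.mono_neutral_right)
    show "\<forall>p\<in>{p. p permutes W} - {p. p permutes W \<and> p b = b}. of_int (sign p) * (\<Prod>i\<in>W. f i (p i)) = 0"
    proof
      fix p assume p: "p \<in> {p. p permutes W} - {p. p permutes W \<and> p b = b}"
      hence "f b (p b) = 0" using b unit by (auto simp: permutes_in_image)
      hence "(\<Prod>i\<in>W. f i (p i)) = 0" using fin b by (intro prod_zero) auto
      thus "of_int (sign p) * (\<Prod>i\<in>W. f i (p i)) = 0" by simp
    qed
  qed (auto simp: fin finite_permutations)
  also have "\<dots> = det_on (W - {b}) f"
    unfolding det_on_def fix_b
  proof (rule sum.cong[OF refl])
    fix p assume "p \<in> {p. p permutes (W - {b})}"
    hence "p b = b" by (simp add: permutes_not_in)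
    thus "of_int (sign p) * (\<Prod>i\<in>W. f i (p i)) = of_int (sign p) * (\<Prod>i\<in>W - {b}. f i (p i))"
      using fin b unit by (simp add: prod.remove)
  qed
  finally show ?thesis .
qed

lemma det_mat_eq_det_on:
  assumes "distinct vs"
  shows "det (mat (length vs) (length vs) (\<lambda>(r, s). f (vs ! r) (vs ! s))) = det_on (set vs) f"
proof -
  let ?n = "length vs"
  have "det (mat ?n ?n (\<lambda>(r, s). f (vs ! r) (vs ! s))) = det_on {0..<?n} (\<lambda>r s. f (vs ! r) (vs ! s))"
    unfolding det_def'[OF mat_carrier] det_on_def
    by (intro sum.cong refl arg_cong2[where f="(*)"] prod.cong) (auto simp: permutes_in_image)
  also have "\<dots> = det_on (set vs) f"
    by (rule det_on_reindex) (auto intro: bij_betw_nth[OF assms])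
  finally show ?thesis .
qed

section \<open>Adding a row and a column from outside the index set\<close>

definition add_row :: "'i \<Rightarrow> 'i \<Rightarrow> 'a::comm_ring_1 \<Rightarrow> ('i \<Rightarrow> 'i \<Rightarrow> 'a) \<Rightarrow> 'i \<Rightarrow> 'i \<Rightarrow> 'a" where
  "add_row i j c f = (\<lambda>a b. f a b + of_bool (a = i) * c * f j b)"

definition add_col :: "'i \<Rightarrow> 'i \<Rightarrow> 'a::comm_ring_1 \<Rightarrow> ('i \<Rightarrow> 'i \<Rightarrow> 'a) \<Rightarrow> 'i \<Rightarrow> 'i \<Rightarrow> 'a" where
  "add_col i j c f = (\<lambda>a b. f a b + of_bool (b = i) * c * f a j)"

lemma det_on_add_row:
  assumes fin: "finite W" and i: "i \<in> W" and j: "j \<notin> W"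
  shows "det_on W (add_row i j c f)
       = det_on W f + c * det_on W (\<lambda>a b. f (Transposition.transpose i j a) b)"
proof -
  have "det_on W (add_row i j c f) = det_on W (\<lambda>a b. if a = i then c * f j b + f i b else f a b)"
    by (rule det_on_cong) (simp add: add_row_def)
  also have "\<dots> = c * det_on W (\<lambda>a b. if a = i then f j b else f a b)
                  + det_on W (\<lambda>a b. if a = i then f i b else f a b)"
    by (rule det_on_row_linear[OF fin i])
  also have "det_on W (\<lambda>a b. if a = i then f j b else f a b)
           = det_on W (\<lambda>a b. f (Transposition.transpose i j a) b)"
    using j by (intro det_on_cong) (auto simp: Transposition.transpose_def)
  also have "det_on W (\<lambda>a b. if a = i then f i b else f a b) = det_on W f"
    by (rule det_on_cong) simp
  finally show ?thesis by simp
qed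

lemma det_on_add_col:
  assumes fin: "finite W" and i: "i \<in> W" and j: "j \<notin> W"
  shows "det_on W (add_col i j c f)
       = det_on W f + c * det_on W (\<lambda>a b. f a (Transposition.transpose i j b))"
proof -
  have "det_on W (add_col i j c f) = det_on W (add_row i j c (\<lambda>a b. f b a))"
    using det_on_transpose[OF fin, of "add_row i j c (\<lambda>a b. f b a)"]
    by (simp add: add_row_def add_col_def)
  also have "\<dots> = det_on W (\<lambda>a b. f b a) + c * det_on W (\<lambda>a b. f b (Transposition.transpose i j a))"
    by (rule det_on_add_row[OF assms])
  finally show ?thesis
    using det_on_transpose[OF fin, of f]
      det_on_transpose[OF fin, of "\<lambda>a b. f a (Transposition.transpose i j b)"]
    by simp
qed

text \<open>On V - {j}, the matrix K (transpose i j a) b is K with row i deleted instead of row j.\<close>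
lemma det_on_swap_deleted_row:
  fixes K :: "'i \<Rightarrow> 'i \<Rightarrow> 'a::field_char_0"
  assumes fin: "finite V" and i: "i \<in> V" and j: "j \<in> V" and ij: "i \<noteq> j"
    and col_sums: "\<And>b. (\<Sum>a\<in>V. K a b) = 0"
  shows "det_on (V - {j}) (\<lambda>a b. K (Transposition.transpose i j a) b) = - det_on (V - {j}) K"
proof -
  define W where "W = V - {j}"
  let ?\<sigma> = "Transposition.transpose i j"
  have finW: "finite W" and iW: "i \<in> W" using fin i ij by (auto simp: W_def)
  have \<sigma>W: "bij_betw ?\<sigma> W (V - {i})"
    using i j by (intro bij_betw_byWitness[where f'="?\<sigma>"]) (auto simp: W_def Transposition.transpose_def)
  have other_rows: "(\<Sum>k\<in>W. K (?\<sigma> k) b) = - K i b" for b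
  proof -
    have "(\<Sum>k\<in>W. K (?\<sigma> k) b) = (\<Sum>a\<in>V - {i}. K a b)"
      by (rule sum.reindex_bij_betw[OF \<sigma>W])
    also have "\<dots> = - K i b"
      using col_sums[of b] fin i by (simp add: sum.remove eq_neg_iff_add_eq_0 add.commute)
    finally show ?thesis .
  qed
  have "det_on W (\<lambda>a b. K (?\<sigma> a) b)
      = det_on W (\<lambda>a b. if a = i then (\<Sum>k\<in>W. K (?\<sigma> k) b) else K (?\<sigma> a) b)"
    by (rule det_on_add_other_rows[OF finW iW, symmetric])
  also have "\<dots> = det_on W (\<lambda>a b. if a = i then (-1) * K i b else K a b)"
    using other_rows by (intro det_on_cong) (auto simp: W_def Transposition.transpose_def)
  also have "\<dots> = - det_on W (\<lambda>a b. if a = i then K i b else K a b)"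
    using det_on_row_scale[OF finW iW, of "-1" "K i" K] by simp
  also have "det_on W (\<lambda>a b. if a = i then K i b else K a b) = det_on W K"
    by (rule det_on_cong) simp
  finally show ?thesis unfolding W_def .
qed

lemma det_on_swap_deleted_col:
  fixes K :: "'i \<Rightarrow> 'i \<Rightarrow> 'a::field_char_0"
  assumes fin: "finite V" and i: "i \<in> V" and j: "j \<in> V" and ij: "i \<noteq> j"
    and row_sums: "\<And>a. (\<Sum>b\<in>V. K a b) = 0"
  shows "det_on (V - {j}) (\<lambda>a b. K a (Transposition.transpose i j b)) = - det_on (V - {j}) K"
  using det_on_swap_deleted_row[OF fin i j ij, of "\<lambda>a b. K b a"] row_sums
    det_on_transpose[of "V - {j}" K] det_on_transpose[of "V - {j}" "\<lambda>a b. K a (Transposition.transpose i j b)"]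
    fin by simp

lemma det_on_glue:
  fixes K :: "'i \<Rightarrow> 'i \<Rightarrow> 'a::field_char_0"
  assumes fin: "finite V" and i: "i \<in> V" and j: "j \<in> V" and ij: "i \<noteq> j"
    and row_sums: "\<And>a. (\<Sum>b\<in>V. K a b) = 0" and col_sums: "\<And>b. (\<Sum>a\<in>V. K a b) = 0"
  shows "det_on (V - {j}) (add_col i j z (add_row i j y K)) = (1 - y) * (1 - z) * det_on (V - {j}) K"
proof -
  define W where "W = V - {j}"
  let ?\<sigma> = "Transposition.transpose i j"
  define d where "d = det_on W K"
  have finW: "finite W" and iW: "i \<in> W" and jW: "j \<notin> W" using fin i ij by (auto simp: W_def)
  have swap_row: "det_on W (\<lambda>a b. K (?\<sigma> a) b) = - d"
    unfolding W_def d_def by (rule det_on_swap_deleted_row[OF fin i j ij col_sums])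
  have swap_col: "det_on W (\<lambda>a b. K a (?\<sigma> b)) = - d"
    unfolding W_def d_def by (rule det_on_swap_deleted_col[OF fin i j ij row_sums])
  have swap_both: "det_on W (\<lambda>a b. K (?\<sigma> a) (?\<sigma> b)) = d"
    using det_on_swap_deleted_row[OF fin i j ij, of "\<lambda>a b. K a (?\<sigma> b)"] col_sums swap_col
    by (simp add: W_def)
  have "det_on W (add_col i j z (add_row i j y K))
      = det_on W (add_row i j y K) + z * det_on W (add_row i j y (\<lambda>a b. K a (?\<sigma> b)))"
    using det_on_add_col[OF finW iW jW, of z "add_row i j y K"] by (simp add: add_row_def)
  also have "\<dots> = (d - y * d) + z * (- d + y * d)"
    using swap_row swap_both det_on_add_row[OF finW iW jW, of y K]
      det_on_add_row[OF finW iW jW, of y "\<lambda>a b. K a (?\<sigma> b)"] swap_col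
    by (simp add: d_def)
  finally show ?thesis unfolding W_def d_def by (simp add: algebra_simps)
qed

section \<open>Laplacians of multigraphs\<close>

fun edge_laplacian :: "'v \<times> 'v \<Rightarrow> 'v \<Rightarrow> 'v \<Rightarrow> 'a::comm_ring_1" where
  "edge_laplacian (a, b) u w = of_bool (u = w) * (of_bool (a = u) + of_bool (b = u))
     - (of_bool (a = u) * of_bool (b = w) + of_bool (b = u) * of_bool (a = w))"

definition laplacian :: "'e set \<Rightarrow> ('e \<Rightarrow> 'v \<times> 'v) \<Rightarrow> 'v \<Rightarrow> 'v \<Rightarrow> 'a::comm_ring_1" where
  "laplacian E ends u w = (\<Sum>e\<in>E. edge_laplacian (ends e) u w)"

lemma edge_laplacian_col_sum:
  assumes "finite V" "a \<in> V" "b \<in> V"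
  shows "(\<Sum>u\<in>V. (edge_laplacian (a, b) u w :: 'a::comm_ring_1)) = 0"
proof -
  have "(\<Sum>u\<in>V. (edge_laplacian (a, b) u w :: 'a))
      = (\<Sum>u\<in>V. if u = w then of_bool (a = w) + of_bool (b = w) else 0)
        - ((\<Sum>u\<in>V. if u = a then of_bool (b = w) else 0) + (\<Sum>u\<in>V. if u = b then of_bool (a = w) else 0))"
    unfolding edge_laplacian.simps sum_subtractf sum.distrib[symmetric]
    by (intro arg_cong2[where f="(-)"] sum.cong refl) auto
  also have "\<dots> = 0" using assms by (auto simp: sum.delta)
  finally show ?thesis .
qed

lemma edge_laplacian_isolated:
  assumes "a = r \<longleftrightarrow> b = r" and "j \<noteq> r"
  shows "edge_laplacian (a, b) r j = 0"
  using assms by (cases "a = r") simp_all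

lemma laplacian_col_sum:
  assumes "multigraph V E ends"
  shows "(\<Sum>u\<in>V. (laplacian E ends u w :: 'a::comm_ring_1)) = 0"
proof -
  have "(\<Sum>u\<in>V. (laplacian E ends u w :: 'a)) = (\<Sum>e\<in>E. \<Sum>u\<in>V. edge_laplacian (ends e) u w)"
    unfolding laplacian_def by (rule sum.swap)
  also have "\<dots> = 0"
  proof (rule sum.neutral, rule ballI)
    fix e assume "e \<in> E"
    hence "finite V" "fst (ends e) \<in> V" "snd (ends e) \<in> V" using assms by (auto simp: multigraph_def)
    thus "(\<Sum>u\<in>V. edge_laplacian (ends e) u w :: 'a) = 0"
      using edge_laplacian_col_sum[of V "fst (ends e)" "snd (ends e)" w] by simp
  qed
  finally show ?thesis .
qed

lemma edge_laplacian_sym: "edge_laplacian ab u w = edge_laplacian ab w u"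
  by (cases ab) auto

lemma laplacian_sym: "laplacian E ends u w = laplacian E ends w u"
  unfolding laplacian_def by (simp add: edge_laplacian_sym[of _ u])

lemma laplacian_row_sum:
  assumes "multigraph V E ends"
  shows "(\<Sum>w\<in>V. (laplacian E ends u w :: 'a::comm_ring_1)) = 0"
proof -
  have "(\<Sum>w\<in>V. (laplacian E ends u w :: 'a)) = (\<Sum>w\<in>V. laplacian E ends w u)"
    by (rule sum.cong[OF refl]) (rule laplacian_sym)
  thus ?thesis using laplacian_col_sum[OF assms] by simp
qed

section \<open>Contraction and spanning trees\<close>

definition merge_into :: "'v \<Rightarrow> 'v \<Rightarrow> 'v \<Rightarrow> 'v" where
  "merge_into a b x = (if x = b then a else x)"

definition contract :: "'v \<Rightarrow> 'v \<Rightarrow> ('e \<Rightarrow> 'v \<times> 'v) \<Rightarrow> 'e \<Rightarrow> 'v \<times> 'v" where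
  "contract a b ends e = (merge_into a b (fst (ends e)), merge_into a b (snd (ends e)))"

definition nonloops :: "'e set \<Rightarrow> ('e \<Rightarrow> 'v \<times> 'v) \<Rightarrow> 'e set" where
  "nonloops T ends = {f\<in>T. fst (ends f) \<noteq> snd (ends f)}"

lemma contract_edge_loop:
  assumes "ends e = (a, b) \<or> ends e = (b, a)"
  shows "contract a b ends e = (a, a)"
  using assms by (cases "ends e") (auto simp: contract_def merge_into_def)

lemma edge_laplacian_contract:
  assumes "u \<notin> {a, b}" "w \<notin> {a, b}"
  shows "edge_laplacian (contract a b ends e) u w = edge_laplacian (ends e) u w"
proof -
  obtain x y where xy: "ends e = (x, y)" by (cases "ends e")
  have "merge_into a b z = u \<longleftrightarrow> z = u" "merge_into a b z = w \<longleftrightarrow> z = w" for z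
    using assms by (auto simp: merge_into_def)
  thus ?thesis by (simp add: xy contract_def)
qed

lemma rtranclp_adj_in_sym: "(adj_in T ends)\<^sup>*\<^sup>* u w \<Longrightarrow> (adj_in T ends)\<^sup>*\<^sup>* w u"
  by (rule sympD[OF symp_rtranclp]) (auto simp: symp_def adj_in_def)

lemma rtranclp_adj_in_mono:
  assumes "T \<subseteq> T'" and "(adj_in T ends)\<^sup>*\<^sup>* u w"
  shows "(adj_in T' ends)\<^sup>*\<^sup>* u w"
proof -
  have "adj_in T ends \<le> adj_in T' ends" using assms(1) unfolding adj_in_def by blast
  thus ?thesis using assms(2) by (rule rtranclp_mono[THEN predicate2D])
qed

lemma rtranclp_adj_in_contract:
  assumes e: "ends e = (a, b) \<or> ends e = (b, a)" and path: "(adj_in T ends)\<^sup>*\<^sup>* x y"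
  shows "(adj_in (T - {e}) (contract a b ends))\<^sup>*\<^sup>* (merge_into a b x) (merge_into a b y)"
  using path
proof (induction rule: rtranclp_induct)
  case (step y z)
  from step.hyps(2) obtain f where f: "f \<in> T" "ends f = (y, z) \<or> ends f = (z, y)"
    unfolding adj_in_def by blast
  show ?case
  proof (cases "f = e")
    case True
    with f e have "merge_into a b y = merge_into a b z" by (auto simp: merge_into_def)
    with step.IH show ?thesis by simp
  next
    case False
    with f have "adj_in (T - {e}) (contract a b ends) (merge_into a b y) (merge_into a b z)"
      unfolding adj_in_def contract_def by (intro bexI[of _ f]) auto
    with step.IH show ?thesis by (rule rtranclp.rtrancl_into_rtrancl)
  qed
qed simp

lemma rtranclp_adj_in_uncontract:
  assumes e: "ends e = (a, b) \<or> ends e = (b, a)" and path: "(adj_in T (contract a b ends))\<^sup>*\<^sup>* p q"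
  shows "(adj_in (insert e T) ends)\<^sup>*\<^sup>* p q"
proof -
  let ?R = "adj_in (insert e T) ends"
  have merge: "?R\<^sup>*\<^sup>* x (merge_into a b x)" for x
    using e by (cases "x = b") (auto simp: merge_into_def adj_in_def)
  have "?R\<^sup>*\<^sup>* p q" if "adj_in T (contract a b ends) p q" for p q
  proof -
    from that obtain f where f: "f \<in> T" "contract a b ends f = (p, q) \<or> contract a b ends f = (q, p)"
      unfolding adj_in_def by blast
    define c where "c = fst (ends f)"
    define d where "d = snd (ends f)"
    have "?R c d" "?R d c" using f(1) unfolding adj_in_def c_def d_def by auto
    moreover have "(p = merge_into a b c \<and> q = merge_into a b d) \<or> (p = merge_into a b d \<and> q = merge_into a b c)"
      using f(2) by (auto simp: contract_def c_def d_def)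
    ultimately show ?thesis
      using merge rtranclp_adj_in_sym[OF merge] by (meson rtranclp.rtrancl_into_rtrancl rtranclp_trans)
  qed
  with path show ?thesis by (induction rule: rtranclp_induct) (auto intro: rtranclp_trans)
qed

lemma rtranclp_adj_in_nonloop:
  assumes "(adj_in T ends)\<^sup>*\<^sup>* x y" "x \<noteq> y"
  shows "\<exists>f\<in>T. fst (ends f) \<noteq> snd (ends f)"
  using assms
proof (induction rule: rtranclp_induct)
  case (step y z)
  from step.hyps(2) obtain f where "f \<in> T" "ends f = (y, z) \<or> ends f = (z, y)"
    unfolding adj_in_def by blast
  thus ?case using step by (cases "y = z") (auto intro: bexI[of _ f])
qed simp

definition isolated :: "'e set \<Rightarrow> ('e \<Rightarrow> 'v \<times> 'v) \<Rightarrow> 'v \<Rightarrow> bool" where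
  "isolated E ends r \<longleftrightarrow> (\<forall>e\<in>E. fst (ends e) = r \<longleftrightarrow> snd (ends e) = r)"

lemma rtranclp_adj_in_isolated:
  assumes "(adj_in T ends)\<^sup>*\<^sup>* r y" and "isolated T ends r"
  shows "y = r"
  using assms(1)
proof (induction rule: rtranclp_induct)
  case (step y z)
  from step.hyps(2) obtain f where f: "f \<in> T" "ends f = (y, z) \<or> ends f = (z, y)"
    unfolding adj_in_def by blast
  thus ?case using bspec[OF assms(2)[unfolded isolated_def] f(1)] step.IH by (metis fst_conv snd_conv)
qed simp

text \<open>Contracting a non-loop edge keeps the graph connected and removes one vertex and at
  least one non-loop edge.\<close>
lemma connected_card_le_nonloops:
  assumes "finite V" "finite T" "\<forall>f\<in>T. fst (ends f) \<in> V \<and> snd (ends f) \<in> V"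
    "\<forall>u\<in>V. \<forall>w\<in>V. (adj_in T ends)\<^sup>*\<^sup>* u w"
  shows "card V \<le> card (nonloops T ends) + 1"
  using assms
proof (induction "card (nonloops T ends)" arbitrary: V ends rule: less_induct)
  case less
  show ?case
  proof (cases "card V \<le> 1")
    case False
    then obtain u w where uw: "u \<in> V" "w \<in> V" "u \<noteq> w"
      using less.prems(1) by (auto simp: card_le_Suc0_iff_eq)
    obtain f where f: "f \<in> T" "fst (ends f) \<noteq> snd (ends f)"
      using rtranclp_adj_in_nonloop[OF less.prems(4)[rule_format, OF uw(1,2)] uw(3)] by blast
    obtain a b where ends_f: "ends f = (a, b)" by (cases "ends f")
    have ab: "a \<in> V" "b \<in> V" "a \<noteq> b" using f less.prems(3) ends_f by auto
    have "contract a b ends f = (a, a)" using ends_f by (intro contract_edge_loop) simp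
    hence "nonloops T (contract a b ends) \<subseteq> nonloops T ends - {f}"
      by (auto simp: nonloops_def contract_def merge_into_def)
    moreover have "f \<in> nonloops T ends" "finite (nonloops T ends)"
      using f less.prems(2) by (auto simp: nonloops_def)
    ultimately have fewer: "card (nonloops T (contract a b ends)) < card (nonloops T ends)"
      by (meson card_Diff1_less card_mono finite_Diff le_less_trans)
    have IH: "card (V - {b}) \<le> card (nonloops T (contract a b ends)) + 1"
    proof (rule less.hyps[OF fewer])
      show "\<forall>g\<in>T. fst (contract a b ends g) \<in> V - {b} \<and> snd (contract a b ends g) \<in> V - {b}"
        using less.prems(3) ab by (auto simp: contract_def merge_into_def)
      show "\<forall>x\<in>V - {b}. \<forall>y\<in>V - {b}. (adj_in T (contract a b ends))\<^sup>*\<^sup>* x y"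
      proof (intro ballI)
        fix x y assume xy: "x \<in> V - {b}" "y \<in> V - {b}"
        have "(adj_in (T - {f}) (contract a b ends))\<^sup>*\<^sup>* (merge_into a b x) (merge_into a b y)"
          using xy less.prems(4) by (intro rtranclp_adj_in_contract[of ends f a b]) (simp_all add: ends_f)
        hence "(adj_in T (contract a b ends))\<^sup>*\<^sup>* (merge_into a b x) (merge_into a b y)"
          by (rule rtranclp_adj_in_mono[rotated]) auto
        thus "(adj_in T (contract a b ends))\<^sup>*\<^sup>* x y" using xy by (simp add: merge_into_def)
      qed
    qed (use less.prems in auto)
    thus ?thesis using fewer ab less.prems(1) False by simp
  qed simp
qed

lemma finite_spanning_trees: "finite E \<Longrightarrow> finite {T. spanning_tree V E ends T}"
  by (rule finite_subset[of _ "Pow E"]) (auto simp: spanning_tree_def)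

lemma spanning_tree_contract:
  assumes mg: "multigraph V E ends" and e: "ends e = (a, b) \<or> ends e = (b, a)" and ab: "a \<noteq> b"
    and T: "spanning_tree V E ends T" and eT: "e \<in> T"
  shows "spanning_tree (V - {b}) E (contract a b ends) (T - {e})"
proof -
  have TE: "T \<subseteq> E" and card: "card T + 1 = card V" and conn: "\<forall>u\<in>V. \<forall>w\<in>V. (adj_in T ends)\<^sup>*\<^sup>* u w"
    using T by (auto simp: spanning_tree_def)
  have finT: "finite T" and finV: "finite V" using TE mg by (auto simp: multigraph_def intro: finite_subset)
  have "fst (ends e) \<in> V" "snd (ends e) \<in> V" using mg TE eT by (auto simp: multigraph_def)
  with e have bV: "b \<in> V" by auto
  have "card (T - {e}) + 1 = card (V - {b})"
    using card eT finT finV bV by (metis Suc_eq_plus1 card.remove card_Diff_singleton diff_Suc_1)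
  moreover have "(adj_in (T - {e}) (contract a b ends))\<^sup>*\<^sup>* u w" if "u \<in> V - {b}" "w \<in> V - {b}" for u w
    using rtranclp_adj_in_contract[of ends e a b, OF e conn[rule_format, of u w]] that by (simp add: merge_into_def)
  ultimately show ?thesis using TE by (auto simp: spanning_tree_def)
qed

lemma spanning_tree_uncontract:
  assumes mg: "multigraph V E ends" and e: "e \<in> E" "ends e = (a, b) \<or> ends e = (b, a)" and ab: "a \<noteq> b"
    and T: "spanning_tree (V - {b}) E (contract a b ends) T"
  shows "e \<notin> T" and "spanning_tree V E ends (insert e T)"
proof -
  have TE: "T \<subseteq> E" and card: "card T + 1 = card (V - {b})"
    and conn: "\<forall>u\<in>V - {b}. \<forall>w\<in>V - {b}. (adj_in T (contract a b ends))\<^sup>*\<^sup>* u w"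
    using T by (auto simp: spanning_tree_def)
  have finV: "finite V" and finT: "finite T" and abV: "a \<in> V" "b \<in> V"
    and inV: "\<And>f. f \<in> E \<Longrightarrow> fst (ends f) \<in> V \<and> snd (ends f) \<in> V"
    using mg e TE by (auto simp: multigraph_def intro: finite_subset)
  have merge_in: "x \<in> V \<Longrightarrow> merge_into a b x \<in> V - {b}" for x
    using abV ab by (auto simp: merge_into_def)
  show eT: "e \<notin> T"
  proof
    assume eT: "e \<in> T"
    have "card (V - {b}) \<le> card (nonloops T (contract a b ends)) + 1"
    proof (rule connected_card_le_nonloops)
      show "\<forall>f\<in>T. fst (contract a b ends f) \<in> V - {b} \<and> snd (contract a b ends f) \<in> V - {b}"
        using TE inV merge_in by (auto simp: contract_def)
    qed (use finV finT conn in auto)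
    moreover have "nonloops T (contract a b ends) \<subseteq> T - {e}"
      using contract_edge_loop[of ends e a b] e(2) by (auto simp: nonloops_def)
    hence "card (nonloops T (contract a b ends)) < card T"
      using finT eT by (meson card_Diff1_less card_mono finite_Diff le_less_trans)
    ultimately show False using card by linarith
  qed
  have "(adj_in (insert e T) ends)\<^sup>*\<^sup>* u w" if "u \<in> V" "w \<in> V" for u w
  proof -
    have merge: "(adj_in (insert e T) ends)\<^sup>*\<^sup>* x (merge_into a b x)" for x
      using e by (cases "x = b") (auto simp: merge_into_def adj_in_def)
    have "(adj_in (insert e T) ends)\<^sup>*\<^sup>* (merge_into a b u) (merge_into a b w)"
      using rtranclp_adj_in_uncontract[of ends e a b, OF e(2)] conn merge_in that by blast
    thus ?thesis using merge[of u] rtranclp_adj_in_sym[OF merge[of w]] by (meson rtranclp_trans)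
  qed
  moreover have "card (insert e T) + 1 = card V" using eT finT card abV finV by simp
  ultimately show "spanning_tree V E ends (insert e T)"
    using TE e by (auto simp: spanning_tree_def)
qed

lemma num_spanning_trees_delete_contract:
  assumes mg: "multigraph V E ends" and e: "e \<in> E" "ends e = (a, b) \<or> ends e = (b, a)" and ab: "a \<noteq> b"
  shows "num_spanning_trees V E ends
       = num_spanning_trees V (E - {e}) ends + num_spanning_trees (V - {b}) E (contract a b ends)"
proof -
  have finE: "finite E" using mg by (simp add: multigraph_def)
  let ?with_e = "{T. spanning_tree V E ends T \<and> e \<in> T}"
  have "{T. spanning_tree V E ends T} = {T. spanning_tree V (E - {e}) ends T} \<union> ?with_e"
    and "{T. spanning_tree V (E - {e}) ends T} \<inter> ?with_e = {}"
    unfolding spanning_tree_def by blast+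
  moreover have "finite {T. spanning_tree V (E - {e}) ends T}" "finite ?with_e"
    using finite_spanning_trees[OF finE, of V ends] finE
    by (auto intro: finite_spanning_trees rev_finite_subset)
  moreover have "bij_betw (\<lambda>T. T - {e}) ?with_e {T. spanning_tree (V - {b}) E (contract a b ends) T}"
    using spanning_tree_contract[OF mg e(2) ab] spanning_tree_uncontract[OF mg e ab]
    by (intro bij_betw_byWitness[where f'="insert e"]) auto
  ultimately show ?thesis
    unfolding num_spanning_trees_def by (simp add: card_Un_disjoint bij_betw_same_card)
qed

section \<open>The matrix-tree theorem\<close>

text \<open>In the reduced Laplacian the edge e between r and b only contributes a 1 at (b, b);
  splitting row b accordingly separates deletion from contraction.\<close>
lemma laplacian_minor_delete_contract:
  fixes ends :: "'e \<Rightarrow> 'v \<times> 'v"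
  assumes mg: "multigraph V E ends" and e: "e \<in> E" "ends e = (r, b) \<or> ends e = (b, r)"
    and br: "b \<noteq> r"
  shows "(det_on (V - {r}) (laplacian E ends) :: 'a::comm_ring_1)
       = det_on (V - {r}) (laplacian (E - {e}) ends)
         + det_on (V - {b} - {r}) (laplacian E (contract r b ends))"
proof -
  define W where "W = V - {r}"
  have finE: "finite E" and bV: "b \<in> V" using mg e by (auto simp: multigraph_def)
  have finW: "finite W" and bW: "b \<in> W" using mg bV br by (auto simp: W_def multigraph_def)
  let ?L' = "laplacian (E - {e}) ends :: 'v \<Rightarrow> 'v \<Rightarrow> 'a"
  have "laplacian E ends u w = (if u = b then ?L' b w + of_bool (w = b) else ?L' u w)"
    if "u \<in> W" "w \<in> W" for u w
  proof -
    have "edge_laplacian (ends e) u w = (of_bool (u = b \<and> w = b) :: 'a)"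
      using e(2) that by (auto simp: W_def)
    thus ?thesis using e(1) finE unfolding laplacian_def by (simp add: sum.remove)
  qed
  hence "det_on W (laplacian E ends) = det_on W (\<lambda>u w. if u = b then ?L' b w + of_bool (w = b) else ?L' u w)"
    by (rule det_on_cong)
  also have "\<dots> = det_on W (\<lambda>u w. if u = b then ?L' b w else ?L' u w)
                  + det_on W (\<lambda>u w. if u = b then of_bool (w = b) else ?L' u w)"
    by (rule det_on_row_add[OF finW bW])
  also have "det_on W (\<lambda>u w. if u = b then ?L' b w else ?L' u w) = det_on W ?L'"
    by (rule det_on_cong) simp
  also have "det_on W (\<lambda>u w. if u = b then of_bool (w = b) else ?L' u w) = det_on (W - {b}) ?L'"
    by (subst det_on_unit_row[OF finW bW]) (auto intro: det_on_cong)
  also have "det_on (W - {b}) ?L' = det_on (W - {b}) (laplacian E (contract r b ends))"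
  proof (rule det_on_cong)
    fix u w assume uw: "u \<in> W - {b}" "w \<in> W - {b}"
    have "edge_laplacian (contract r b ends f) u w = (edge_laplacian (ends f) u w :: 'a)" for f
      using uw by (intro edge_laplacian_contract) (auto simp: W_def)
    moreover have "edge_laplacian (contract r b ends e) u w = (0 :: 'a)"
      using contract_edge_loop[of ends e r b] e(2) by simp
    ultimately show "?L' u w = laplacian E (contract r b ends) u w"
      using e(1) finE unfolding laplacian_def by (simp add: sum.remove)
  qed
  finally show ?thesis
    unfolding W_def by (metis Diff_insert2 insert_commute)
qed

lemma laplacian_minor_isolated:
  assumes mg: "multigraph V E ends" and r: "r \<in> V" "isolated E ends r" and V: "V \<noteq> {r}"
  shows "(det_on (V - {r}) (laplacian E ends) :: 'a::field_char_0) = 0"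
proof -
  define W where "W = V - {r}"
  obtain w0 where w0: "w0 \<in> W" using V r by (auto simp: W_def)
  have finV: "finite V" and finW: "finite W" using mg by (auto simp: W_def multigraph_def)
  have "(\<Sum>k\<in>W. laplacian E ends k j :: 'a) = 0" if "j \<in> W" for j
  proof -
    have "edge_laplacian (ends e) r j = (0 :: 'a)" if "e \<in> E" for e
    proof -
      obtain a b where ab: "ends e = (a, b)" by (cases "ends e")
      have "a = r \<longleftrightarrow> b = r" using bspec[OF r(2)[unfolded isolated_def] that] ab by simp
      moreover have "j \<noteq> r" using \<open>j \<in> W\<close> by (simp add: W_def)
      ultimately show ?thesis unfolding ab by (rule edge_laplacian_isolated)
    qed
    hence "laplacian E ends r j = (0 :: 'a)" unfolding laplacian_def by simp
    thus ?thesis using laplacian_col_sum[OF mg, of j, where 'a='a] finV r(1) by (simp add: W_def sum.remove)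
  qed
  hence "det_on W (\<lambda>a b. if a = w0 then (\<Sum>k\<in>W. laplacian E ends k b) else laplacian E ends a b) = (0 :: 'a)"
    by (intro det_on_zero_row[OF finW w0]) simp
  thus ?thesis unfolding det_on_add_other_rows[OF finW w0] by (simp add: W_def)
qed

lemma num_spanning_trees_singleton:
  assumes "finite E"
  shows "num_spanning_trees {r} E ends = 1"
proof -
  have "T = {}" if "spanning_tree {r} E ends T" for T
    using that assms by (auto simp: spanning_tree_def dest: finite_subset)
  hence "{T. spanning_tree {r} E ends T} = {{}}" by (auto simp: spanning_tree_def)
  thus ?thesis by (simp add: num_spanning_trees_def)
qed

lemma num_spanning_trees_isolated:
  assumes r: "r \<in> V" "isolated E ends r" and V: "V \<noteq> {r}"
  shows "num_spanning_trees V E ends = 0"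
proof -
  obtain w where w: "w \<in> V" "w \<noteq> r" using r V by blast
  have False if "spanning_tree V E ends T" for T
  proof -
    have "(adj_in T ends)\<^sup>*\<^sup>* r w" using that r w by (auto simp: spanning_tree_def)
    moreover have "T \<subseteq> E" using that by (simp add: spanning_tree_def)
    hence "isolated T ends r" using r(2) unfolding isolated_def by blast
    ultimately have "w = r" by (rule rtranclp_adj_in_isolated)
    with w(2) show False by simp
  qed
  hence "{T. spanning_tree V E ends T} = {}" by blast
  thus ?thesis by (simp add: num_spanning_trees_def)
qed

theorem matrix_tree_theorem:
  assumes "multigraph V E ends" and "r \<in> V"
  shows "(det_on (V - {r}) (laplacian E ends) :: 'a::field_char_0) = of_nat (num_spanning_trees V E ends)"
  using assms
proof (induction "card (nonloops E ends)" arbitrary: V E ends r rule: less_induct)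
  case less
  have finE: "finite E" using less.prems(1) by (simp add: multigraph_def)
  show ?case
  proof (cases "isolated E ends r")
    case False
    then obtain e b where e: "e \<in> E" "ends e = (r, b) \<or> ends e = (b, r)" and br: "b \<noteq> r"
      unfolding isolated_def by (metis prod.collapse)
    have e_nonloop: "e \<in> nonloops E ends" using e br by (auto simp: nonloops_def)
    have fin: "finite (nonloops E ends)" using finE by (simp add: nonloops_def)
    have "nonloops (E - {e}) ends = nonloops E ends - {e}" by (auto simp: nonloops_def)
    hence delete: "card (nonloops (E - {e}) ends) < card (nonloops E ends)"
      using card_Diff1_less[OF fin e_nonloop] by (simp only:)
    have "nonloops E (contract r b ends) \<subseteq> nonloops E ends - {e}"
      using contract_edge_loop[of ends e r b] e(2)
      by (auto simp: nonloops_def contract_def merge_into_def)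
    hence contract: "card (nonloops E (contract r b ends)) < card (nonloops E ends)"
      using e_nonloop fin by (meson card_Diff1_less card_mono finite_Diff le_less_trans)
    have mg_delete: "multigraph V (E - {e}) ends" using less.prems(1) by (auto simp: multigraph_def)
    have mg_contract: "multigraph (V - {b}) E (contract r b ends)"
      using less.prems br by (auto simp: multigraph_def contract_def merge_into_def)
    have "r \<in> V - {b}" using less.prems(2) br by simp
    show ?thesis
      by (simp only: laplacian_minor_delete_contract[OF less.prems(1) e br]
          less.hyps[OF delete mg_delete less.prems(2)] less.hyps[OF contract mg_contract \<open>r \<in> V - {b}\<close>]
          num_spanning_trees_delete_contract[OF less.prems(1) e br[symmetric]] of_nat_add)
  next
    case True
    then show ?thesis
      using laplacian_minor_isolated[OF less.prems True] num_spanning_trees_isolated[OF less.prems(2) True]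
        num_spanning_trees_singleton[OF finE]
      by (cases "V = {r}") auto
  qed
qed

section \<open>The Laplacian of the infinite join\<close>

lemma laplacian_poly_eq_det_on:
  assumes "finite W"
  shows "laplacian_poly W Eq pends
       = det_on W (\<lambda>i j. of_bool (i = j) * per_deg Eq pends i - per_adj Eq pends i j)"
proof -
  define vs where "vs = sorted_list_of_set W"
  have vs: "distinct vs" "set vs = W" using assms by (auto simp: vs_def)
  have "per_laplacian W Eq pends = mat (length vs) (length vs)
      (\<lambda>(r, s). (\<lambda>i j. of_bool (i = j) * per_deg Eq pends i - per_adj Eq pends i j) (vs ! r) (vs ! s))"
    unfolding per_laplacian_def Let_def vs_def[symmetric]
    by (rule eq_matI) (use vs in \<open>auto simp: nth_eq_iff_index_eq\<close>)
  thus ?thesis unfolding laplacian_poly_def using det_mat_eq_det_on[OF vs(1)] vs(2) by simp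
qed

lemma fls_X_intpow_one: "fls_X_intpow 1 = (fls_X :: 'a::comm_ring_1 fls)"
  by (simp add: fls_X_conv_shift_1)

lemma fls_X_intpow_inverse: "fls_X_intpow 1 * fls_X_intpow (-1) = (1 :: 'a::comm_ring_1 fls)"
  by (simp add: fls_X_intpow_times_conv_shift)

lemma one_minus_mult_one_minus_inverse:
  fixes x z t :: "'a::comm_ring_1"
  assumes "x * z = 1"
  shows "(1 - x) * (1 - z) * t = - z * (t * (x - 1)^2)"
proof -
  have "(1 - x) * (1 - z) = 1 - x - z + x * z" by (simp add: algebra_simps)
  moreover have "- z * (x - 1)^2 = - (x * z) * x + 2 * (x * z) - z" by (simp add: algebra_simps power2_eq_square)
  ultimately show ?thesis using assms by (simp add: algebra_simps)
qed

lemma if_eq_of_bool_mult: "(if P then c else 0) = of_bool P * (c :: 'a::semiring_1)"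
  by simp

lemma join_edge_laplacian:
  fixes p :: "int \<Rightarrow> 'a::comm_ring_1"
  assumes "i \<noteq> v''" "j \<noteq> v''" "v' \<noteq> v''" and "p 0 = 1" "p 1 * p (-1) = 1"
  shows "of_bool (i = j) * (case (join_lift v' v'' (fst xy), join_lift v' v'' (snd xy)) of
            ((a, \<alpha>), (b, \<beta>)) \<Rightarrow> (if a = i then 1 else 0) + (if b = i then 1 else 0))
       - (case (join_lift v' v'' (fst xy), join_lift v' v'' (snd xy)) of
            ((a, \<alpha>), (b, \<beta>)) \<Rightarrow> (if a = i \<and> b = j then p (\<beta> - \<alpha>) else 0)
              + (if b = i \<and> a = j then p (\<alpha> - \<beta>) else 0))
     = add_col v' v'' (p (-1)) (add_row v' v'' (p 1) (edge_laplacian xy)) i j"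
proof -
  obtain x y where xy: "xy = (x, y)" by (cases xy)
  have ne: "of_bool (v'' = i) = (0::'a)" "of_bool (v'' = j) = (0::'a)" "of_bool (v' = v'') = (0::'a)"
    using assms by auto
  show ?thesis
    using assms(5) unfolding xy
    by (cases "x = v''"; cases "y = v''")
       (simp_all add: join_lift_def add_col_def add_row_def if_eq_of_bool_mult of_bool_conj ne assms(4)
         algebra_simps)
qed

lemma add_row_add_col_sum:
  "add_col i j z (add_row i j y (\<lambda>a b. \<Sum>e\<in>E. f e a b)) a b = (\<Sum>e\<in>E. add_col i j z (add_row i j y (f e)) a b)"
  by (simp add: add_col_def add_row_def sum.distrib sum_distrib_left ring_distribs)

lemma join_laplacian_entry:
  assumes "i \<noteq> v''" "j \<noteq> v''" "v' \<noteq> v''"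
  shows "of_bool (i = j) * per_deg E (join_ends ends v' v'') i - per_adj E (join_ends ends v' v'') i j
       = add_col v' v'' (fls_X_intpow (-1)) (add_row v' v'' (fls_X_intpow 1) (laplacian E ends)) i j"
  unfolding laplacian_def add_row_add_col_sum per_deg_def per_adj_def join_ends_def
    sum_distrib_left sum_subtractf[symmetric]
  by (intro sum.cong refl join_edge_laplacian[OF assms, where p="\<lambda>k. fls_X_intpow k"])
     (use fls_X_intpow_inverse in simp_all)

theorem mainTheorem6:
  fixes V :: "'v::linorder set" and E :: "'e set" and ends :: "'e \<Rightarrow> 'v \<times> 'v"
    and v' v'' :: 'v
  assumes "multigraph V E ends"
    and "v' \<in> V" and "v'' \<in> V" and "v' \<noteq> v''"
  shows "assoc_laurent
           (laplacian_poly (V - {v''}) E (join_ends ends v' v''))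
           (of_nat (num_spanning_trees V E ends) * (fls_X - 1)^2)"
proof -
  let ?\<tau> = "of_nat (num_spanning_trees V E ends) :: rat fls"
  have fin: "finite V" using assms(1) by (simp add: multigraph_def)
  have "laplacian_poly (V - {v''}) E (join_ends ends v' v'')
      = det_on (V - {v''}) (add_col v' v'' (fls_X_intpow (-1)) (add_row v' v'' (fls_X_intpow 1) (laplacian E ends)))"
    using fin assms(4) unfolding laplacian_poly_eq_det_on[OF finite_Diff[OF fin]]
    by (intro det_on_cong) (simp add: join_laplacian_entry)
  also have "\<dots> = (1 - fls_X_intpow 1) * (1 - fls_X_intpow (-1)) * det_on (V - {v''}) (laplacian E ends)"
    using laplacian_row_sum[OF assms(1)] laplacian_col_sum[OF assms(1)]
    by (intro det_on_glue[OF fin assms(2-4)])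
  also have "\<dots> = (1 - fls_X_intpow 1) * (1 - fls_X_intpow (-1)) * ?\<tau>"
    by (simp only: matrix_tree_theorem[OF assms(1,3)])
  also have "\<dots> = - fls_X_intpow (-1) * (?\<tau> * (fls_X_intpow 1 - 1)^2)"
    by (rule one_minus_mult_one_minus_inverse[OF fls_X_intpow_inverse])
  also have "\<dots> = fls_const (-1) * fls_X_intpow (-1) * (?\<tau> * (fls_X - 1)^2)"
    by (simp add: fls_X_intpow_one)
  finally show ?thesis
    unfolding assoc_laurent_def by (intro exI[of _ "-1::rat"] exI[of _ "-1::int"]) simp
qed

end
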